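(* For $\varepsilon\in(0,1)$, the set $S^A$ described below is a feasible solution of PKP with $\prod_{j\in S^A}p_j\ge(1-\varepsilon)z^*$, where $z^*$ is the optimal value of the PKP instance.
   Context: The Product Knapsack Problem (PKP): items $j\in N=\{1,\dots,n\}$ with integer weights $w_j$ and integer profits $p_j$, and a positive integer capacity $C$; find $S\subseteq N$ with $\sum_{j\in S}w_j\le C$ maximizing $\prod_{j\in S}p_j$ (the empty set has value $0$). Instances satisfy: (a) $w_j\le C$; (b) $p_j\ne 0$; (c) for each $j$ with $p_j<0$ there is $j'\ne j$ with $p_{j'}<0$ and $w_j+w_{j'}\le C$; (d) $w_j\ge 0$; (e) $p_j<0$ whenever $w_j=0$. Let $N^-=\{j:p_j\le -1\}$, $p_{\max}=\max_j|p_j|$, and assume $p_{\max}\ge 2$; $\log$ is base 2. Set $K=\varepsilon/n^2$ and scaled profits $\tilde p_j=\lfloor \log(|p_j|)/K\rfloor$. The set $S^A$ is computed by dynamic programming over the arrays $W^+_j(\tilde p)$, $W^-_j(\tilde p)$ (minimum total weight of a subset of $\{1,\dots,j\}$ with scaled-profit sum exactly $\tilde p$ and an even, resp. odd, number of items of $N^-$) and is the set represented by $W^+_n(\tilde p)$ for $\tilde p=\max\{\tilde p:W^+_n(\tilde p)\le C\}$; thus $S^A$ satisfies $\sum_{j\in S^A}w_j\le C$, $|S^A\cap N^-|$ is even, and $S^A$ maximizes $\sum_{j\in S}\tilde p_j$ among all such subsets $S\subseteq N$. *)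

theory Defs
  imports Complex_Main
begin

definition pkp_feasible :: "nat \<Rightarrow> (nat \<Rightarrow> int) \<Rightarrow> int \<Rightarrow> nat set \<Rightarrow> bool" where
  "pkp_feasible n w C S \<longleftrightarrow> S \<subseteq> {1..n} \<and> (\<Sum>j\<in>S. w j) \<le> C"

definition pkp_val :: "(nat \<Rightarrow> int) \<Rightarrow> nat set \<Rightarrow> int" where
  "pkp_val p S = (if S = {} then 0 else (\<Prod>j\<in>S. p j))"

definition pkp_opt :: "nat \<Rightarrow> (nat \<Rightarrow> int) \<Rightarrow> (nat \<Rightarrow> int) \<Rightarrow> int \<Rightarrow> int" where
  "pkp_opt n w p C = Max (pkp_val p ` {S. pkp_feasible n w C S})"

definition neg_items :: "nat \<Rightarrow> (nat \<Rightarrow> int) \<Rightarrow> nat set" where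
  "neg_items n p = {j \<in> {1..n}. p j \<le> -1}"

definition scaled_profit :: "nat \<Rightarrow> real \<Rightarrow> (nat \<Rightarrow> int) \<Rightarrow> nat \<Rightarrow> int" where
  "scaled_profit n eps p j = \<lfloor>log 2 \<bar>real_of_int (p j)\<bar> / (eps / (real n)^2)\<rfloor>"

end

theory Submission imports Defs begin

text \<open>An optimal solution has value at least 2 (by (c) and \<open>p\<^sub>m\<^sub>a\<^sub>x \<ge> 2\<close>), so its product is
  positive and it contains an even number of negative items; hence it competes with \<open>S\<^sup>A\<close> in
  the scaled problem. Measured in \<open>log\<^sub>2 |p\<^sub>j|\<close>, rounding down loses less than \<open>K\<close> per item,
  so \<open>S\<^sup>A\<close> is at most \<open>n K = \<epsilon>/n \<le> \<epsilon>\<close> behind the optimum in the logarithm, and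
  \<open>2\<^sup>-\<^sup>\<epsilon> \<ge> 1 - \<epsilon>\<close>.\<close>

lemma prod_eq_sign_mult_prod_abs:
  fixes f :: "'a \<Rightarrow> 'b::linordered_idom"
  assumes "finite S"
  shows "prod f S = (-1) ^ card {x\<in>S. f x < 0} * (\<Prod>x\<in>S. \<bar>f x\<bar>)"
proof -
  have "prod f S = (\<Prod>x\<in>S. (if f x < 0 then -1 else 1) * \<bar>f x\<bar>)"
    by (rule prod.cong) auto
  also have "\<dots> = (\<Prod>x\<in>S. if f x < 0 then -1 else 1) * (\<Prod>x\<in>S. \<bar>f x\<bar>)"
    by (rule prod.distrib)
  also have "(\<Prod>x\<in>S. if f x < 0 then -1 else 1) = ((-1::'b) ^ card {x\<in>S. f x < 0})"
    using assms by (simp add: prod.If_cases Int_def)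
  finally show ?thesis .
qed

lemma even_card_neg_if_prod_pos:
  fixes f :: "'a \<Rightarrow> 'b::linordered_idom"
  assumes "finite S" and "prod f S > 0"
  shows "even (card {x\<in>S. f x < 0})"
proof (rule ccontr)
  assume "odd (card {x\<in>S. f x < 0})"
  then have "prod f S = - (\<Prod>x\<in>S. \<bar>f x\<bar>)"
    using prod_eq_sign_mult_prod_abs[OF assms(1), of f] by simp
  with assms(2) prod_nonneg[of S "\<lambda>x. \<bar>f x\<bar>"] show False
    by simp
qed

lemma one_minus_le_two_powr_neg:
  fixes x :: real
  assumes "0 \<le> x"
  shows "1 - x \<le> 2 powr (- x)"
proof -
  have "1 - x * ln 2 \<le> 2 powr (- x)"
    using exp_ge_add_one_self[of "- x * ln 2"] by (simp add: powr_def)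
  moreover have "x * ln 2 \<le> x"
    using assms ln_2_less_1 by (simp add: mult_left_le)
  ultimately show ?thesis by linarith
qed

lemma floor_divide_scaled_bounds:
  fixes x K :: real
  assumes "K > 0"
  shows "K * \<lfloor>x / K\<rfloor> \<le> x" and "x < K * \<lfloor>x / K\<rfloor> + K"
proof -
  have "K * \<lfloor>x / K\<rfloor> \<le> K * (x / K)"
    using assms by (intro mult_left_mono) auto
  with assms show "K * \<lfloor>x / K\<rfloor> \<le> x" by simp
  have "K * (x / K) < K * (\<lfloor>x / K\<rfloor> + 1)"
    using assms by (intro mult_strict_left_mono) auto
  with assms show "x < K * \<lfloor>x / K\<rfloor> + K" by (simp add: distrib_left)
qed

definition log_value :: "(nat \<Rightarrow> int) \<Rightarrow> nat set \<Rightarrow> real" where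
  "log_value p S = (\<Sum>j\<in>S. log 2 \<bar>real_of_int (p j)\<bar>)"

lemma pkp_val_eq_powr_log_value:
  assumes "finite S" "S \<noteq> {}" "\<forall>j\<in>S. p j \<noteq> 0" "even (card {j\<in>S. p j < 0})"
  shows "real_of_int (pkp_val p S) = 2 powr log_value p S"
proof -
  have "prod p S = (\<Prod>j\<in>S. \<bar>p j\<bar>)"
    using prod_eq_sign_mult_prod_abs[OF assms(1), of p] assms(4) by simp
  with assms(2,3) show ?thesis
    by (simp add: pkp_val_def log_value_def powr_sum)
qed

lemma log_value_le_if_scaled_sum_le:
  assumes "0 < eps" "n \<ge> 1" "finite T" "card T \<le> n"
    and "(\<Sum>j\<in>T. scaled_profit n eps p j) \<le> (\<Sum>j\<in>S. scaled_profit n eps p j)"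
  shows "log_value p T \<le> log_value p S + eps"
proof -
  define K where "K = eps / (real n)^2"
  have "K > 0" using assms(1,2) by (simp add: K_def)
  have sp: "scaled_profit n eps p j = \<lfloor>log 2 \<bar>real_of_int (p j)\<bar> / K\<rfloor>" for j
    by (simp add: scaled_profit_def K_def)
  have "log_value p T \<le> (\<Sum>j\<in>T. K * scaled_profit n eps p j + K)"
    unfolding log_value_def sp
    by (intro sum_mono less_imp_le floor_divide_scaled_bounds(2) \<open>K > 0\<close>)
  also have "\<dots> = K * (\<Sum>j\<in>T. scaled_profit n eps p j) + K * card T"
    by (simp add: sum.distrib sum_distrib_left)
  also have "\<dots> \<le> K * (\<Sum>j\<in>S. scaled_profit n eps p j) + K * n"
    using assms(4,5) \<open>K > 0\<close>
    by (intro add_mono mult_left_mono) (simp_all only: of_int_le_iff of_nat_le_iff less_imp_le)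
  also have "K * (\<Sum>j\<in>S. scaled_profit n eps p j) \<le> log_value p S"
    unfolding log_value_def sp of_int_sum sum_distrib_left
    by (intro sum_mono floor_divide_scaled_bounds(1) \<open>K > 0\<close>)
  also have "K * n \<le> eps"
    using assms(1,2) by (simp add: K_def power2_eq_square field_simps)
  finally show ?thesis by simp
qed

lemma finite_pkp_feasible: "finite {S. pkp_feasible n w C S}"
  unfolding pkp_feasible_def by (rule finite_subset[of _ "Pow {1..n}"]) auto

lemma pkp_val_le_opt: "pkp_feasible n w C S \<Longrightarrow> pkp_val p S \<le> pkp_opt n w p C"
  unfolding pkp_opt_def by (intro Max_ge finite_imageI finite_pkp_feasible) auto

lemma pkp_opt_attained:
  assumes "C \<ge> 0"
  obtains S where "pkp_feasible n w C S" "pkp_val p S = pkp_opt n w p C"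
proof -
  have "pkp_feasible n w C {}" using assms by (simp add: pkp_feasible_def)
  then have "pkp_opt n w p C \<in> pkp_val p ` {S. pkp_feasible n w C S}"
    unfolding pkp_opt_def by (intro Max_in finite_imageI finite_pkp_feasible) auto
  then show ?thesis using that by auto
qed

lemma pkp_opt_ge_two:
  assumes "n \<ge> 1" "\<forall>j\<in>{1..n}. w j \<le> C"
    and "\<forall>j\<in>{1..n}. p j < 0 \<longrightarrow> (\<exists>j'\<in>{1..n}. j' \<noteq> j \<and> p j' < 0 \<and> w j + w j' \<le> C)"
    and "Max ((\<lambda>j. \<bar>p j\<bar>) ` {1..n}) \<ge> 2"
  shows "pkp_opt n w p C \<ge> 2"
proof -
  obtain j where j: "j \<in> {1..n}" "\<bar>p j\<bar> \<ge> 2"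
    using Max_in[of "(\<lambda>j. \<bar>p j\<bar>) ` {1..n}"] assms(1,4) by fastforce
  show ?thesis
  proof (cases "p j < 0")
    case True
    then obtain j' where j': "j' \<in> {1..n}" "j' \<noteq> j" "p j' < 0" "w j + w j' \<le> C"
      using assms(3) j(1) by blast
    have "pkp_feasible n w C {j, j'}"
      using j(1) j' by (simp add: pkp_feasible_def)
    then have "p j * p j' \<le> pkp_opt n w p C"
      using pkp_val_le_opt[of n w C "{j, j'}" p] j'(2) by (simp add: pkp_val_def)
    moreover have "2 * 1 \<le> (- p j) * (- p j')"
      using True j(2) j'(3) by (intro mult_mono) auto
    ultimately show ?thesis by linarith
  next
    case False
    have "pkp_feasible n w C {j}"
      using j(1) assms(2) by (simp add: pkp_feasible_def)
    then have "p j \<le> pkp_opt n w p C"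
      using pkp_val_le_opt[of n w C "{j}" p] by (simp add: pkp_val_def)
    with False j(2) show ?thesis by linarith
  qed
qed

lemma Int_neg_items: "S \<subseteq> {1..n} \<Longrightarrow> S \<inter> neg_items n p = {j\<in>S. p j < 0}"
  by (auto simp: neg_items_def)

theorem proposition2:
  fixes n :: nat and w p :: "nat \<Rightarrow> int" and C :: int and eps :: real
    and SA :: "nat set"
  assumes C_pos: "C > 0"
    and a: "\<forall>j\<in>{1..n}. w j \<le> C"
    and b: "\<forall>j\<in>{1..n}. p j \<noteq> 0"
    and c: "\<forall>j\<in>{1..n}. p j < 0 \<longrightarrow>
              (\<exists>j'\<in>{1..n}. j' \<noteq> j \<and> p j' < 0 \<and> w j + w j' \<le> C)"
    and d: "\<forall>j\<in>{1..n}. w j \<ge> 0"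
    and e: "\<forall>j\<in>{1..n}. w j = 0 \<longrightarrow> p j < 0"
    and pmax: "Max ((\<lambda>j. \<bar>p j\<bar>) ` {1..n}) \<ge> 2" and n_pos: "n \<ge> 1"
    and eps: "0 < eps" "eps < 1"
    and SA_feas: "pkp_feasible n w C SA"
    and SA_even: "even (card (SA \<inter> neg_items n p))"
    and SA_max: "\<forall>S. pkp_feasible n w C S \<and> even (card (S \<inter> neg_items n p)) \<longrightarrow>
                  (\<Sum>j\<in>S. scaled_profit n eps p j) \<le> (\<Sum>j\<in>SA. scaled_profit n eps p j)"
  shows "pkp_feasible n w C SA \<and>
         real_of_int (pkp_val p SA) \<ge> (1 - eps) * real_of_int (pkp_opt n w p C)"
proof -
  define z where "z = pkp_opt n w p C"
  obtain S where S: "pkp_feasible n w C S" "pkp_val p S = z"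
    using pkp_opt_attained C_pos unfolding z_def by (metis less_imp_le)
  have z: "z \<ge> 2" unfolding z_def using pkp_opt_ge_two n_pos a c pmax .
  have S_sub: "S \<subseteq> {1..n}" "finite S" and SA_sub: "SA \<subseteq> {1..n}" "finite SA"
    using S(1) SA_feas by (auto simp: pkp_feasible_def intro: finite_subset)
  have "S \<noteq> {}" "prod p S > 0" using S(2) z by (auto simp: pkp_val_def split: if_splits)
  then have S_even: "even (card {j\<in>S. p j < 0})"
    using even_card_neg_if_prod_pos S_sub(2) by blast
  have z_powr: "real_of_int z = 2 powr log_value p S"
    using pkp_val_eq_powr_log_value[OF S_sub(2) \<open>S \<noteq> {}\<close> _ S_even] S(2) S_sub(1) b by auto
  have "log_value p S \<le> log_value p SA + eps"
    using log_value_le_if_scaled_sum_le[OF eps(1) n_pos S_sub(2)] card_mono[OF _ S_sub(1)]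
      SA_max S(1) S_even Int_neg_items[OF S_sub(1)] by simp
  moreover have "log_value p S \<ge> 1"
    using z z_powr powr_le_cancel_iff[of 2 1 "log_value p S"] by simp
  ultimately have "SA \<noteq> {}" using eps(2) by (auto simp: log_value_def)
  then have SA_powr: "real_of_int (pkp_val p SA) = 2 powr log_value p SA"
    using pkp_val_eq_powr_log_value[OF SA_sub(2)] SA_sub(1) b SA_even Int_neg_items[OF SA_sub(1)]
    by auto
  have "(1 - eps) * z \<le> 2 powr (- eps) * 2 powr log_value p S"
    using one_minus_le_two_powr_neg[of eps] eps z z_powr by (intro mult_mono) auto
  also have "\<dots> \<le> 2 powr log_value p SA"
    using \<open>log_value p S \<le> log_value p SA + eps\<close> by (simp flip: powr_add)
  finally show ?thesis using SA_feas SA_powr unfolding z_def by simp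
qed

end
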